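(* For all integers $n\ge 1$ and $r\ge 1$, $$\sum_{k=1}^n {(-1)^k\over k^r}{n\choose k}{n+k\choose k}=-\sum_{d=1}^r 2^d\sum_{\substack{{\bf s}=(s_1,\dots,s_d)\\ |{\bf s}|=r}} H_n(s_1,s_2,\dots,s_d),$$ where the inner sum runs over all vectors ${\bf s}=(s_1,\dots,s_d)$ of positive integers with $s_1+\cdots+s_d=r$.
   Context: For a vector ${\bf s}=(s_1,\dots,s_d)$ of positive integers, $|{\bf s}|=\sum_{i=1}^d s_i$, and the multiple harmonic sum is $H_n(s_1,\dots,s_d)=\sum_{1\le k_1<k_2<\cdots<k_d\le n}\frac{1}{k_1^{s_1}k_2^{s_2}\cdots k_d^{s_d}}$. *)

theory Defs
  imports Complex_Main
begin

definition mhs :: "nat \<Rightarrow> nat list \<Rightarrow> real" where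
  "mhs n s = (\<Sum>ks \<in> {ks :: nat list. length ks = length s \<and> sorted_wrt (<) ks \<and> set ks \<subseteq> {1..n}}.
               \<Prod>i<length s. 1 / (real (ks ! i) ^ (s ! i)))"

definition compositions :: "nat \<Rightarrow> nat \<Rightarrow> nat list set" where
  "compositions r d = {s :: nat list. length s = d \<and> (\<forall>x\<in>set s. 0 < x) \<and> sum_list s = r}"

end

theory Submission
  imports Defs
begin

text \<open>Both sides are the coefficient of x^r in the expansion at x = 0 of
  P_n(x) = prod_{j=1..n} (j + x)/(j - x).
  Partial fractions give P_n(x) = (-1)^n + sum_k A_{n,k}/(k - x) with
  A_{n,k} = (-1)^(k-1) k C(n,k) C(n+k,k), and 1/(k - x) = sum_r x^r/k^(r+1) shows that the
  x^r-coefficient is minus the left-hand side. Writing each factor as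
  (1 + x/j)/(1 - x/j) = 1 + 2 sum_{m>=1} (x/j)^m and multiplying out gives the right-hand side.
  Instead of manipulating power series, both coefficient families are shown to satisfy the
  recurrence c(n+1, r) = c(n, r) + 2 sum_{m=1..r} c(n, r-m)/(n+1)^m that reflects
  P_{n+1}(x) = P_n(x) (n+1+x)/(n+1-x); on the multiple harmonic side it comes from splitting
  off the terms with largest index k_d = n+1.\<close>

text \<open>The coefficient A_{n,k} of 1/(k - x) in the partial fraction expansion of P_n.\<close>
definition pf_coeff :: "nat \<Rightarrow> nat \<Rightarrow> real" where
  "pf_coeff n k = (\<Prod>j=1..n. real j + real k) /
     ((\<Prod>j=1..k-1. real j - real k) * (\<Prod>j=k+1..n. real j - real k))"

lemma pf_coeff_Suc:
  assumes "1 \<le> k" "k \<le> n"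
  shows "pf_coeff (Suc n) k = pf_coeff n k * (real (Suc n) + real k) / (real (Suc n) - real k)"
proof -
  have "(\<Prod>j=1..k-1. real j - real k) \<noteq> 0" "(\<Prod>j=k+1..n. real j - real k) \<noteq> 0"
    by (subst prod_zero_iff; auto)+
  moreover have "(\<Prod>j=k+1..Suc n. real j - real k) = (\<Prod>j=k+1..n. real j - real k) * (real (Suc n) - real k)"
    using assms by simp
  moreover have "(\<Prod>j=1..Suc n. real j + real k) = (\<Prod>j=1..n. real j + real k) * (real (Suc n) + real k)"
    by simp
  moreover have "real (Suc n) - real k \<noteq> 0" using assms by simp
  ultimately show ?thesis unfolding pf_coeff_def
    by (simp only:) (simp add: field_simps del: prod.cl_ivl_Suc)
qed

lemma pf_coeff_diag:
  "pf_coeff (Suc n) (Suc n) = 2 * real (Suc n) * (\<Prod>j=1..n. (real j + real (Suc n)) / (real j - real (Suc n)))"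
proof -
  have "(\<Prod>j=1..Suc n. real j + real (Suc n)) = (\<Prod>j=1..n. real j + real (Suc n)) * (2 * real (Suc n))"
    by simp
  moreover have "(\<Prod>j=Suc n+1..Suc n. real j - real (Suc n)) = 1" by simp
  ultimately show ?thesis unfolding pf_coeff_def prod_dividef by simp
qed

lemma partial_fraction_times_ratio:
  fixes a k N x :: real
  assumes "N \<noteq> x" "k \<noteq> x" "N \<noteq> k"
  shows "a / (k - x) * ((N + x) / (N - x)) = a * (N + k) / (N - k) / (k - x) + 2 * N * (a / (k - N)) / (N - x)"
  using assms by (simp add: divide_simps) (simp add: algebra_simps)

lemma prod_ratio_partial_fractions:
  fixes x :: real
  assumes "\<forall>k\<in>{1..n}. x \<noteq> real k"
  shows "(\<Prod>k=1..n. (real k + x) / (real k - x)) = (-1)^n + (\<Sum>k=1..n. pf_coeff n k / (real k - x))"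
  using assms
proof (induction n arbitrary: x)
  case 0
  then show ?case by simp
next
  case (Suc n)
  define N where "N = real (Suc n)"
  have xN: "x \<noteq> N" using Suc.prems N_def by (metis atLeastAtMost_iff le_refl Suc_le_mono le0 One_nat_def)
  have IHx: "(\<Prod>k=1..n. (real k + x) / (real k - x)) = (-1)^n + (\<Sum>k=1..n. pf_coeff n k / (real k - x))"
    using Suc.IH Suc.prems by auto
  have IHN: "(\<Prod>k=1..n. (real k + N) / (real k - N)) = (-1)^n + (\<Sum>k=1..n. pf_coeff n k / (real k - N))"
    using Suc.IH unfolding N_def by auto
  have split_terms: "(\<Sum>k=1..n. pf_coeff n k / (real k - x) * ((N + x) / (N - x)))
      = (\<Sum>k=1..n. pf_coeff (Suc n) k / (real k - x)) + 2 * N * (\<Sum>k=1..n. pf_coeff n k / (real k - N)) / (N - x)"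
  proof -
    have "pf_coeff n k / (real k - x) * ((N + x) / (N - x)) =
        pf_coeff (Suc n) k / (real k - x) + 2 * N * (pf_coeff n k / (real k - N)) / (N - x)"
      if "k \<in> {1..n}" for k
    proof -
      have "real k \<noteq> N" "real k \<noteq> x" using that Suc.prems N_def by auto
      then show ?thesis
        using xN that partial_fraction_times_ratio[of N x "real k" "pf_coeff n k"]
        by (simp add: pf_coeff_Suc N_def)
    qed
    then show ?thesis
      by (simp add: sum.distrib sum_distrib_left sum_divide_distrib)
  qed
  have "(\<Prod>k=1..Suc n. (real k + x) / (real k - x)) = (\<Prod>k=1..n. (real k + x) / (real k - x)) * ((N + x) / (N - x))"
    by (simp add: N_def)
  also have "\<dots> = (-1)^n * ((N + x) / (N - x)) + (\<Sum>k=1..n. pf_coeff n k / (real k - x) * ((N + x) / (N - x)))"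
    by (simp only: IHx distrib_right sum_distrib_right)
  also have "(-1)^n * ((N + x) / (N - x)) = (-1) ^ Suc n + 2 * N * (-1)^n / (N - x)"
    using xN by (simp add: field_simps)
  finally have "(\<Prod>k=1..Suc n. (real k + x) / (real k - x)) = (-1) ^ Suc n + (\<Sum>k=1..n. pf_coeff (Suc n) k / (real k - x))
     + 2 * N * ((-1)^n + (\<Sum>k=1..n. pf_coeff n k / (real k - N))) / (N - x)"
    unfolding split_terms by (simp add: distrib_left add_divide_distrib)
  \<comment> \<open>the induction hypothesis at the new pole x = n + 1 yields the new coefficient\<close>
  also have "2 * N * ((-1)^n + (\<Sum>k=1..n. pf_coeff n k / (real k - N))) / (N - x) = pf_coeff (Suc n) (Suc n) / (real (Suc n) - x)"
    by (simp only: pf_coeff_diag N_def[symmetric] IHN)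
  finally show ?case by simp
qed

lemma prod_plus_const_eq_fact: "(\<Prod>j=1..n. real j + real k) = fact (n + k) / fact k"
proof (induction n)
  case 0 then show ?case by simp
next
  case (Suc n)
  have "(\<Prod>j=1..Suc n. real j + real k) = fact (n + k) / fact k * (real (Suc n) + real k)"
    using Suc.IH by simp
  moreover have "fact (Suc n + k) = (real (Suc n) + real k) * (fact (n + k) :: real)"
    by (simp add: fact_Suc)
  ultimately show ?case by simp
qed

lemma prod_minus_const_above: "k \<le> n \<Longrightarrow> (\<Prod>j=k+1..n. real j - real k) = fact (n - k)"
proof (induction n rule: dec_induct)
  case base then show ?case by simp
next
  case (step n)
  have "(\<Prod>j=k+1..Suc n. real j - real k) = (\<Prod>j=k+1..n. real j - real k) * (real (Suc n) - real k)"
    using step by simp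
  also have "\<dots> = fact (n - k) * real (Suc (n - k))" using step by (simp add: of_nat_diff)
  also have "\<dots> = fact (Suc n - k)" using step by (simp add: Suc_diff_le)
  finally show ?case .
qed

lemma prod_minus_const_below: "m < c \<Longrightarrow> (\<Prod>j=1..m. real j - real c) = (-1)^m * fact (c - 1) / fact (c - 1 - m)"
proof (induction m)
  case 0 then show ?case by simp
next
  case (Suc m)
  have f: "fact (c - 1 - m) = real (c - 1 - m) * fact (c - 1 - Suc m)"
    using Suc.prems by (metis Suc_diff_Suc diff_Suc_eq_diff_pred fact_Suc zero_less_diff)
  have "(\<Prod>j=1..Suc m. real j - real c) = (\<Prod>j=1..m. real j - real c) * (real (Suc m) - real c)" by simp
  also have "\<dots> = (-1)^m * fact (c - 1) / fact (c - 1 - m) * (real (Suc m) - real c)"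
    using Suc by simp
  also have "real (Suc m) - real c = - real (c - 1 - m)" using Suc.prems by (simp add: of_nat_diff)
  moreover have "real (c - 1 - m) \<noteq> 0" using Suc.prems by simp
  moreover have "(fact (c - 1 - Suc m) :: real) \<noteq> 0" by simp
  moreover have "\<And>d G F :: real. d \<noteq> 0 \<Longrightarrow> G \<noteq> 0 \<Longrightarrow> (-1)^m*F/(d*G)*(-d) = (-1)^Suc m * F/G"
    by (simp add: field_simps)
  ultimately show ?case unfolding f by metis
qed

lemma pf_coeff_closed_form:
  assumes "1 \<le> k" "k \<le> n"
  shows "pf_coeff n k = (-1)^(k-1) * real k * real (n choose k) * real ((n + k) choose k)"
proof -
  have below: "(\<Prod>j=1..k-1. real j - real k) = (-1)^(k-1) * fact (k - 1)"
    using prod_minus_const_below[of "k-1" k] assms by simp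
  have choose_n: "real (n choose k) = fact n / (fact k * fact (n - k))"
    using assms by (simp add: binomial_fact)
  have choose_nk: "real ((n + k) choose k) = fact (n + k) / (fact k * fact n)"
    using binomial_fact[of k "n+k"] by simp
  have fact_k: "fact k = real k * (fact (k - 1) :: real)"
    using assms by (simp add: fact_reduce)
  have "(fact (k-1)::real) \<noteq> 0" "(fact (n-k)::real) \<noteq> 0" "(fact n::real) \<noteq> 0" "real k \<noteq> 0"
    using assms by auto
  then show ?thesis
    unfolding pf_coeff_def prod_plus_const_eq_fact below prod_minus_const_above[OF assms(2)] choose_n choose_nk fact_k
    by (simp add: field_simps)
qed

text \<open>The coefficient of x^r in P_n, read off from the partial fraction expansion.\<close>
definition prod_ratio_coeff :: "nat \<Rightarrow> nat \<Rightarrow> real" where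
  "prod_ratio_coeff n r = (if r = 0 then (-1)^n else 0) + (\<Sum>k=1..n. pf_coeff n k * (1 / real k) ^ (r+1))"

lemma prod_ratio_coeff_r0: "prod_ratio_coeff n 0 = 1"
proof -
  have "(\<Prod>k=1..n. (real k + 0) / (real k - 0)) = (-1)^n + (\<Sum>k=1..n. pf_coeff n k / (real k - 0))"
    by (rule prod_ratio_partial_fractions) auto
  moreover have "(\<Prod>k=1..n. (real k + 0) / (real k - 0)) = 1" by (rule prod.neutral) auto
  ultimately show ?thesis unfolding prod_ratio_coeff_def by simp
qed

lemma prod_ratio_coeff_n0: "r \<ge> 1 \<Longrightarrow> prod_ratio_coeff 0 r = 0"
  unfolding prod_ratio_coeff_def by simp

lemma prod_ratio_coeff_eq_binomial_sum:
  assumes "r \<ge> 1"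
  shows "prod_ratio_coeff n r
    = - (\<Sum>k=1..n. (-1) ^ k / real k ^ r * real (n choose k) * real ((n + k) choose k))"
proof -
  have "pf_coeff n k * (1 / real k) ^ (r+1)
      = - ((-1) ^ k / real k ^ r * real (n choose k) * real ((n + k) choose k))"
    if k: "k \<in> {1..n}" for k
  proof -
    have "(-1::real) ^ k = - ((-1) ^ (k - 1))" "real k \<noteq> 0"
      using k by (auto simp: power_eq_if)
    then show ?thesis
      using k by (simp add: pf_coeff_closed_form power_one_over field_simps)
  qed
  then show ?thesis
    unfolding prod_ratio_coeff_def sum_negf[symmetric] using assms by simp
qed

lemma geometric_sum_mult_diff:
  fixes a b :: real
  shows "(a - b) * (\<Sum>m=1..r. a^(r-m+1)*b^m) = a*b*(a^r - b^r)"
proof (induction r)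
  case 0 then show ?case by simp
next
  case (Suc r)
  have "(\<Sum>m=1..Suc r. a^(Suc r-m+1)*b^m) = (\<Sum>m=1..r. a^(Suc r-m+1)*b^m) + a*b^(Suc r)" by simp
  also have "(\<Sum>m=1..r. a^(Suc r-m+1)*b^m) = a * (\<Sum>m=1..r. a^(r-m+1)*b^m)"
    unfolding sum_distrib_left by (rule sum.cong) (auto simp: Suc_diff_le)
  finally have "(a - b) * (\<Sum>m=1..Suc r. a^(Suc r-m+1)*b^m) = a * ((a - b) * (\<Sum>m=1..r. a^(r-m+1)*b^m)) + (a-b)*a*b^(Suc r)"
    by (simp add: algebra_simps)
  also have "\<dots> = a*b*(a^Suc r - b^Suc r)" unfolding Suc.IH by (simp add: algebra_simps)
  finally show ?case .
qed

lemma ratio_power_geometric_identity: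
  fixes a b :: real
  assumes "a \<noteq> b"
  shows "(a+b)/(a-b)*a^(r+1) + 2*b^r*(-(a*b)/(a-b)) = a^(r+1) + 2*(\<Sum>m=1..r. a^(r-m+1)*b^m)"
proof -
  have "a - b \<noteq> 0" using assms by simp
  moreover have "(\<Sum>m=1..r. a^(r-m+1)*b^m) = a*b*(a^r - b^r)/(a-b)"
    using geometric_sum_mult_diff[of a b r] \<open>a - b \<noteq> 0\<close> by (simp add: field_simps)
  ultimately show ?thesis by (simp add: divide_simps) (simp add: algebra_simps)
qed

lemma recurrence_term_identity:
  fixes k N :: real
  assumes "k \<noteq> 0" "N \<noteq> 0" "k \<noteq> N"
  shows "(N + k) / (N - k) * (1/k)^(r+1) + 2 * (1/N)^r * (1 / (k - N)) =
         (1/k)^(r+1) + 2 * (\<Sum>m=1..r. (1/k)^(r-m+1)*(1/N)^m)"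
proof -
  have "1/k \<noteq> 1/N" using assms by simp
  moreover have "(N + k) / (N - k) = (1/k + 1/N)/(1/k - 1/N)" "1 / (k - N) = -((1/k)*(1/N))/(1/k - 1/N)"
    using assms by (simp_all add: field_simps)
  ultimately show ?thesis using ratio_power_geometric_identity by presburger
qed

lemma prod_ratio_coeff_Suc_expand:
  fixes n r :: nat
  assumes "r \<ge> 1"
  defines "N \<equiv> real (Suc n)"
  shows "prod_ratio_coeff (Suc n) r
    = (\<Sum>k=1..n. pf_coeff n k * ((N + real k) / (N - real k) * (1 / real k) ^ (r+1)
                                  + 2 * (1 / N) ^ r * (1 / (real k - N))))
      + 2 * (-1)^n * (1 / N) ^ r"
proof -
  have "(\<Prod>k=1..n. (real k + N) / (real k - N)) = (-1)^n + (\<Sum>k=1..n. pf_coeff n k / (real k - N))"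
    by (rule prod_ratio_partial_fractions) (auto simp: N_def)
  then have "pf_coeff (Suc n) (Suc n) = 2 * N * ((-1)^n + (\<Sum>k=1..n. pf_coeff n k / (real k - N)))"
    by (simp only: pf_coeff_diag N_def[symmetric])
  moreover have "N \<noteq> 0" by (simp add: N_def)
  ultimately have diag: "pf_coeff (Suc n) (Suc n) * (1 / N) ^ (r+1)
      = 2 * ((-1)^n + (\<Sum>k=1..n. pf_coeff n k / (real k - N))) * (1 / N) ^ r"
    by simp
  have "(\<Sum>k=1..n. pf_coeff (Suc n) k * (1 / real k) ^ (r+1))
      = (\<Sum>k=1..n. pf_coeff n k * ((N + real k) / (N - real k) * (1 / real k) ^ (r+1)))"
    by (rule sum.cong) (auto simp: pf_coeff_Suc N_def)
  moreover have "prod_ratio_coeff (Suc n) r = (\<Sum>k=1..n. pf_coeff (Suc n) k * (1 / real k) ^ (r+1))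
      + pf_coeff (Suc n) (Suc n) * (1 / N) ^ (r+1)"
    using assms by (simp add: prod_ratio_coeff_def N_def)
  ultimately show ?thesis unfolding diag
    by (simp add: distrib_left distrib_right sum.distrib sum_distrib_left sum_distrib_right algebra_simps)
qed

lemma prod_ratio_coeff_convolution_expand:
  fixes b :: real
  assumes "r \<ge> 1"
  shows "prod_ratio_coeff n r + 2 * (\<Sum>m=1..r. prod_ratio_coeff n (r - m) * b ^ m)
    = (\<Sum>k=1..n. pf_coeff n k * ((1 / real k) ^ (r+1) + 2 * (\<Sum>m=1..r. (1 / real k) ^ (r - m + 1) * b ^ m)))
      + 2 * (-1)^n * b ^ r"
proof -
  have "(\<Sum>m=1..r. (if r - m = 0 then (-1)^n else 0) * b ^ m) = (\<Sum>m=1..r. if m = r then (-1)^n * b ^ m else 0)"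
    by (rule sum.cong) auto
  also have "\<dots> = (-1)^n * b ^ r" using assms by (simp add: sum.delta')
  finally have constant_part: "(\<Sum>m=1..r. (if r - m = 0 then (-1)^n else 0) * b ^ m) = (-1)^n * b ^ r" .
  have swap: "(\<Sum>m=1..r. (\<Sum>k=1..n. pf_coeff n k * (1 / real k) ^ (r - m + 1)) * b ^ m)
      = (\<Sum>k=1..n. pf_coeff n k * (\<Sum>m=1..r. (1 / real k) ^ (r - m + 1) * b ^ m))"
    unfolding sum_distrib_right sum_distrib_left mult.assoc by (rule sum.swap)
  have "(\<Sum>m=1..r. prod_ratio_coeff n (r - m) * b ^ m)
      = (\<Sum>m=1..r. (if r - m = 0 then (-1)^n else 0) * b ^ m)
        + (\<Sum>m=1..r. (\<Sum>k=1..n. pf_coeff n k * (1 / real k) ^ (r - m + 1)) * b ^ m)"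
    unfolding prod_ratio_coeff_def distrib_right sum.distrib by simp
  then show ?thesis
    using assms unfolding constant_part swap
    by (simp add: prod_ratio_coeff_def distrib_left sum.distrib sum_distrib_left algebra_simps)
qed

lemma prod_ratio_coeff_Suc:
  assumes "r \<ge> 1"
  shows "prod_ratio_coeff (Suc n) r
    = prod_ratio_coeff n r + 2 * (\<Sum>m=1..r. prod_ratio_coeff n (r - m) * (1 / real (Suc n)) ^ m)"
  unfolding prod_ratio_coeff_Suc_expand[OF assms] prod_ratio_coeff_convolution_expand[OF assms]
  by (intro arg_cong2[where f="(+)"] refl sum.cong arg_cong2[where f="(*)"] recurrence_term_identity) auto

definition incr_seqs :: "nat \<Rightarrow> nat \<Rightarrow> nat list set" where
  "incr_seqs n l = {ks. length ks = l \<and> sorted_wrt (<) ks \<and> set ks \<subseteq> {1..n}}"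

lemma mhs_incr_seqs: "mhs n s = (\<Sum>ks \<in> incr_seqs n (length s). \<Prod>i<length s. 1 / (real (ks ! i) ^ (s ! i)))"
  unfolding mhs_def incr_seqs_def by simp

lemma finite_incr_seqs: "finite (incr_seqs n l)"
  by (rule finite_subset[OF _ finite_lists_length_eq[of "{1..n}" l]]) (auto simp: incr_seqs_def)

lemma incr_seqs_Suc:
  "incr_seqs (Suc n) (Suc l) = incr_seqs n (Suc l) \<union> (\<lambda>ks. ks @ [Suc n]) ` incr_seqs n l"
proof (rule set_eqI, rule iffI)
  fix ks assume ks: "ks \<in> incr_seqs (Suc n) (Suc l)"
  show "ks \<in> incr_seqs n (Suc l) \<union> (\<lambda>ks. ks @ [Suc n]) ` incr_seqs n l"
  proof (cases "Suc n \<in> set ks")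
    case False
    then have "set ks \<subseteq> {1..n}" using ks by (auto simp: incr_seqs_def le_Suc_eq)
    then show ?thesis using ks by (auto simp: incr_seqs_def)
  next
    case True
    obtain ks' b where kb: "ks = ks' @ [b]"
      using ks by (cases ks rule: rev_exhaust) (auto simp: incr_seqs_def)
    have sw: "sorted_wrt (<) ks'" "\<forall>x\<in>set ks'. x < b"
      using ks kb by (auto simp: incr_seqs_def sorted_wrt_append)
    have "b \<le> Suc n" using ks kb by (auto simp: incr_seqs_def)
    moreover have "Suc n \<le> b" using True kb sw by auto
    ultimately have "b = Suc n" by simp
    then have "ks' \<in> incr_seqs n l"
      using ks kb sw by (fastforce simp: incr_seqs_def less_Suc_eq_le)
    then show ?thesis using kb \<open>b = Suc n\<close> by blast
  qed
next
  fix ks assume "ks \<in> incr_seqs n (Suc l) \<union> (\<lambda>ks. ks @ [Suc n]) ` incr_seqs n l"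
  then show "ks \<in> incr_seqs (Suc n) (Suc l)"
    by (auto simp: incr_seqs_def sorted_wrt_append) (meson atLeastAtMost_iff le_imp_less_Suc subsetD)+
qed

lemma mhs_Suc_snoc: "mhs (Suc n) (s @ [a]) = mhs n (s @ [a]) + mhs n s * (1 / real (Suc n)) ^ a"
proof -
  define f where "f = (\<lambda>ks. \<Prod>i<Suc (length s). 1 / (real (ks ! i) ^ ((s @ [a]) ! i)))"
  have disj: "incr_seqs n (Suc (length s)) \<inter> (\<lambda>ks. ks @ [Suc n]) ` incr_seqs n (length s) = {}"
    by (auto simp: incr_seqs_def)
  have inj: "inj_on (\<lambda>ks. ks @ [Suc n]) (incr_seqs n (length s))" by (auto simp: inj_on_def)
  have "mhs (Suc n) (s @ [a]) = sum f (incr_seqs (Suc n) (Suc (length s)))"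
    unfolding mhs_incr_seqs f_def by simp
  also have "\<dots> = sum f (incr_seqs n (Suc (length s))) + sum f ((\<lambda>ks. ks @ [Suc n]) ` incr_seqs n (length s))"
    unfolding incr_seqs_Suc by (rule sum.union_disjoint[OF finite_incr_seqs _ disj]) (simp add: finite_incr_seqs)
  also have "sum f (incr_seqs n (Suc (length s))) = mhs n (s @ [a])"
    unfolding mhs_incr_seqs f_def by simp
  also have "sum f ((\<lambda>ks. ks @ [Suc n]) ` incr_seqs n (length s)) = (\<Sum>ks\<in>incr_seqs n (length s). f (ks @ [Suc n]))"
    by (rule sum.reindex[OF inj, unfolded comp_def])
  also have "\<dots> = (\<Sum>ks\<in>incr_seqs n (length s). (\<Prod>i<length s. 1 / (real (ks ! i) ^ (s ! i))) * (1 / real (Suc n)) ^ a)"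
  proof (rule sum.cong[OF refl])
    fix ks assume "ks \<in> incr_seqs n (length s)"
    then have l: "length ks = length s" by (simp add: incr_seqs_def)
    have "f (ks @ [Suc n]) = (\<Prod>i<length s. 1 / (real ((ks @ [Suc n]) ! i) ^ ((s @ [a]) ! i))) * (1 / real (Suc n) ^ a)"
      unfolding f_def using l by (simp add: nth_append)
    also have "(\<Prod>i<length s. 1 / (real ((ks @ [Suc n]) ! i) ^ ((s @ [a]) ! i))) = (\<Prod>i<length s. 1 / (real (ks ! i) ^ (s ! i)))"
      by (rule prod.cong) (auto simp: nth_append l)
    finally show "f (ks @ [Suc n]) = (\<Prod>i<length s. 1 / (real (ks ! i) ^ (s ! i))) * (1 / real (Suc n)) ^ a"
      by (simp add: power_one_over)
  qed
  also have "\<dots> = mhs n s * (1 / real (Suc n)) ^ a" unfolding mhs_incr_seqs sum_distrib_right ..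
  finally show ?thesis .
qed

lemma mhs_Nil: "mhs n [] = 1"
proof -
  have "incr_seqs n 0 = {[]}" by (auto simp: incr_seqs_def)
  then show ?thesis unfolding mhs_incr_seqs by simp
qed

lemma mhs_0: "s \<noteq> [] \<Longrightarrow> mhs 0 s = 0"
proof -
  assume "s \<noteq> []"
  then have "incr_seqs 0 (length s) = {}" by (auto simp: incr_seqs_def)
  then show ?thesis unfolding mhs_incr_seqs by simp
qed

lemma length_le_sum_list_pos: "\<forall>x\<in>set s. 0 < x \<Longrightarrow> length s \<le> sum_list s"
  by (induction s) auto

lemma compositions_empty: "r < d \<Longrightarrow> compositions r d = {}"
  unfolding compositions_def using length_le_sum_list_pos by fastforce

lemma compositions_0_0: "compositions 0 0 = {[]}"
  unfolding compositions_def by auto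

lemma compositions_pos_0: "0 < r \<Longrightarrow> compositions r 0 = {}"
  unfolding compositions_def by auto

lemma finite_compositions: "finite (compositions r d)"
  by (rule finite_subset[OF _ finite_lists_length_eq[of "{0..r}" d]])
     (auto simp: compositions_def member_le_sum_list)

lemma compositions_Suc:
  "compositions r (Suc d) = (\<lambda>(a, s). s @ [a]) ` (SIGMA a:{1..r}. compositions (r - a) d)"
proof (rule set_eqI, rule iffI)
  fix t assume t: "t \<in> compositions r (Suc d)"
  obtain s a where sa: "t = s @ [a]"
    using t by (cases t rule: rev_exhaust) (auto simp: compositions_def)
  have "a \<in> {1..r}" "s \<in> compositions (r - a) d"
    using t sa by (auto simp: compositions_def)
  then show "t \<in> (\<lambda>(a, s). s @ [a]) ` (SIGMA a:{1..r}. compositions (r - a) d)"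
    using sa by force
qed (auto simp: compositions_def)

lemma sum_compositions_Suc:
  "(\<Sum>t\<in>compositions r (Suc d). F t) = (\<Sum>a=1..r. \<Sum>s\<in>compositions (r - a) d. F (s @ [a]))"
proof -
  have inj: "inj_on (\<lambda>(a, s). s @ [a]) (SIGMA a:{1..r}. compositions (r - a) d)"
    by (auto simp: inj_on_def)
  show ?thesis unfolding compositions_Suc sum.reindex[OF inj]
    by (simp add: sum.Sigma finite_compositions split_beta)
qed

definition weighted_mhs :: "nat \<Rightarrow> nat \<Rightarrow> real" where
  "weighted_mhs n r = (\<Sum>d\<le>r. 2 ^ d * (\<Sum>s\<in>compositions r d. mhs n s))"

lemma weighted_mhs_extend:
  "r \<le> M \<Longrightarrow> weighted_mhs n r = (\<Sum>d\<le>M. 2 ^ d * (\<Sum>s\<in>compositions r d. mhs n s))"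
  unfolding weighted_mhs_def by (rule sum.mono_neutral_left) (auto simp: compositions_empty)

lemma weighted_mhs_r0: "weighted_mhs n 0 = 1"
  unfolding weighted_mhs_def by (simp add: compositions_0_0 mhs_Nil)

lemma weighted_mhs_n0: "r \<ge> 1 \<Longrightarrow> weighted_mhs 0 r = 0"
  unfolding weighted_mhs_def
  by (intro sum.neutral ballI) (auto simp: compositions_pos_0 compositions_def intro!: sum.neutral mhs_0)

lemma weighted_mhs_eq_sum_from_1:
  assumes "r \<ge> 1"
  shows "weighted_mhs n r = (\<Sum>d=1..r. 2 ^ d * (\<Sum>s\<in>compositions r d. mhs n s))"
proof -
  have "{..r} = insert 0 {1..r}" by auto
  then show ?thesis unfolding weighted_mhs_def using assms by (simp add: compositions_pos_0)
qed

lemma weighted_mhs_Suc: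
  assumes "r \<ge> 1"
  shows "weighted_mhs (Suc n) r = weighted_mhs n r + 2 * (\<Sum>m=1..r. weighted_mhs n (r - m) * (1 / real (Suc n)) ^ m)"
proof -
  obtain q where q: "r = Suc q" using assms by (cases r) auto
  define b where "b = 1 / real (Suc n)"
  define C where "C = (\<lambda>n r d. \<Sum>s\<in>compositions r d. mhs n s)"
  have shifted: "weighted_mhs n' r = (\<Sum>d\<le>q. 2 ^ Suc d * C n' r (Suc d))" for n'
    unfolding weighted_mhs_def C_def q sum.atMost_Suc_shift by (simp add: compositions_pos_0)
  have C_Suc: "C (Suc n) r (Suc d) = C n r (Suc d) + (\<Sum>a=1..r. C n (r - a) d * b ^ a)" for d
    unfolding C_def sum_compositions_Suc mhs_Suc_snoc b_def sum.distrib sum_distrib_right ..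
  have "weighted_mhs (Suc n) r = weighted_mhs n r + 2 * (\<Sum>d\<le>q. 2 ^ d * (\<Sum>a=1..r. C n (r - a) d * b ^ a))"
    unfolding shifted C_Suc by (simp add: distrib_left sum.distrib sum_distrib_left algebra_simps)
  also have "(\<Sum>d\<le>q. 2 ^ d * (\<Sum>a=1..r. C n (r - a) d * b ^ a)) = (\<Sum>a=1..r. (\<Sum>d\<le>q. 2 ^ d * C n (r - a) d) * b ^ a)"
    by (simp add: sum_distrib_left sum_distrib_right sum.swap[of _ "{..q}"] algebra_simps)
  also have "\<dots> = (\<Sum>a=1..r. weighted_mhs n (r - a) * b ^ a)"
  proof (rule sum.cong[OF refl])
    fix a assume "a \<in> {1..r}"
    then have "r - a \<le> q" using q by auto
    then show "(\<Sum>d\<le>q. 2 ^ d * C n (r - a) d) * b ^ a = weighted_mhs n (r - a) * b ^ a"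
      by (simp add: weighted_mhs_extend[of "r - a" q n] C_def)
  qed
  finally show ?thesis by (simp add: b_def)
qed

lemma weighted_mhs_eq_prod_ratio_coeff: "weighted_mhs n r = prod_ratio_coeff n r"
proof (induction n arbitrary: r)
  case 0
  then show ?case
    by (cases "r = 0") (simp_all add: weighted_mhs_r0 prod_ratio_coeff_r0 weighted_mhs_n0 prod_ratio_coeff_n0)
next
  case (Suc n)
  then show ?case
    by (cases "r = 0") (simp_all add: weighted_mhs_r0 prod_ratio_coeff_r0 weighted_mhs_Suc prod_ratio_coeff_Suc)
qed

theorem theorem4p1:
  fixes n r :: nat
  assumes "n \<ge> 1" and "r \<ge> 1"
  shows "(\<Sum>k=1..n. (-1) ^ k / real k ^ r * real (n choose k) * real ((n + k) choose k))
       = - (\<Sum>d=1..r. 2 ^ d * (\<Sum>s\<in>compositions r d. mhs n s))"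
  using weighted_mhs_eq_prod_ratio_coeff[of n r]
  unfolding weighted_mhs_eq_sum_from_1[OF assms(2)] prod_ratio_coeff_eq_binomial_sum[OF assms(2)]
  by simp

end
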